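(* The set $\check{S}_{AB}$ (the maximal tensor product of $\mathfrak{S}_A$ and $\mathfrak{S}_B$), equipped with the pointwise partial order, is a down-complete Inf semi-lattice, the infimum of any family being computed pointwise: $$\forall \{\Phi_i\;\vert\; i\in I\}\subseteq \check{S}_{AB},\ \forall (\mathfrak{l}_A,\mathfrak{l}_B)\in\mathfrak{E}_A\times\mathfrak{E}_B,\quad \Big(\inf^{\check{S}_{AB}}_{i\in I}\Phi_i\Big)(\mathfrak{l}_A,\mathfrak{l}_B)=\bigwedge_{i\in I}\Phi_i(\mathfrak{l}_A,\mathfrak{l}_B).$$
   Context: $\mathfrak{B}=\{\mathbf{Y},\mathbf{N},\bot\}$ is the poset with $\bot\le\mathbf{Y}$, $\bot\le\mathbf{N}$ and $\mathbf{Y},\mathbf{N}$ incomparable; $\wedge$ denotes its meet ($x\wedge y=x$ if $x=y$, $\bot$ otherwise), and $\overline{\cdot}$ the involution exchanging $\mathbf{Y}$ and $\mathbf{N}$ and fixing $\bot$. $(\mathfrak{S}_A,\mathfrak{E}_A,\epsilon^{\mathfrak{S}_A})$ and $(\mathfrak{S}_B,\mathfrak{E}_B,\epsilon^{\mathfrak{S}_B})$ are States/Effects Chu spaces: $\mathfrak{S}$ and $\mathfrak{E}$ are down-complete Inf semi-lattices (infimum of a subset $X$ written $\inf^{\mathfrak{S}}X$, $\inf^{\mathfrak{E}}X$), $\mathfrak{S}$ has a bottom, and $\epsilon^{\mathfrak{S}}:\mathfrak{E}\to\mathfrak{B}^{\mathfrak{S}}$ preserves arbitrary infima in each variable and is separated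 and extensional; each effect $\mathfrak{l}$ has a negation $\overline{\mathfrak{l}}\in\mathfrak{E}$ with $\epsilon_{\overline{\mathfrak{l}}}(\sigma)=\overline{\epsilon_{\mathfrak{l}}(\sigma)}$, and there is an effect $\mathfrak{Y}_{\mathfrak{E}}$ with $\epsilon_{\mathfrak{Y}_{\mathfrak{E}}}\equiv\mathbf{Y}$. The maximal tensor product $\check{S}_{AB}$ is the set of maps $\Phi:\mathfrak{E}_A\times\mathfrak{E}_B\to\mathfrak{B}$ such that $\Phi(\inf^{\mathfrak{E}_A}_{i}\mathfrak{l}_{i,A},\mathfrak{l}_B)=\bigwedge_i\Phi(\mathfrak{l}_{i,A},\mathfrak{l}_B)$ and $\Phi(\mathfrak{l}_A,\inf^{\mathfrak{E}_B}_{j}\mathfrak{l}_{j,B})=\bigwedge_j\Phi(\mathfrak{l}_A,\mathfrak{l}_{j,B})$ for all families, $\Phi(\overline{\mathfrak{l}_A},\mathfrak{Y}_{\mathfrak{E}_B})=\overline{\Phi(\mathfrak{l}_A,\mathfrak{Y}_{\mathfrak{E}_B})}$, $\Phi(\mathfrak{Y}_{\mathfrak{E}_A},\overline{\mathfrak{l}_B})=\overline{\Phi(\mathfrak{Y}_{\mathfrak{E}_A},\mathfrak{l}_B)}$, and $\Phi(\mathfrak{Y}_{\mathfrak{E}_A},\mathfrak{Y}_{\mathfrak{E}_B})=\mathbf{Y}$. *)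

theory Defs
  imports Main
begin

datatype B = Yb | Nb | Bot

definition leB :: "B \<Rightarrow> B \<Rightarrow> bool" where
  "leB x y \<longleftrightarrow> x = Bot \<or> x = y"

definition negB :: "B \<Rightarrow> B" where
  "negB x = (case x of Yb \<Rightarrow> Nb | Nb \<Rightarrow> Yb | Bot \<Rightarrow> Bot)"

text \<open>Meet of a (nonempty) set of values of B: Y if all are Y, N if all are N, Bot otherwise.\<close>
definition Bmeet :: "B set \<Rightarrow> B" where
  "Bmeet X = (if \<exists>v. X = {v} then the_elem X else Bot)"

definition is_glb_in :: "'a set \<Rightarrow> ('a \<Rightarrow> 'a \<Rightarrow> bool) \<Rightarrow> 'a set \<Rightarrow> 'a \<Rightarrow> bool" where
  "is_glb_in C le X x \<longleftrightarrow> x \<in> C \<and> (\<forall>y\<in>X. le x y) \<and> (\<forall>z\<in>C. (\<forall>y\<in>X. le z y) \<longrightarrow> le z x)"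

definition dc_inf_semilattice :: "'a set \<Rightarrow> ('a \<Rightarrow> 'a \<Rightarrow> bool) \<Rightarrow> bool" where
  "dc_inf_semilattice C le \<longleftrightarrow>
     (\<forall>x\<in>C. le x x) \<and>
     (\<forall>x\<in>C. \<forall>y\<in>C. le x y \<longrightarrow> le y x \<longrightarrow> x = y) \<and>
     (\<forall>x\<in>C. \<forall>y\<in>C. \<forall>z\<in>C. le x y \<longrightarrow> le y z \<longrightarrow> le x z) \<and>
     (\<forall>X. X \<subseteq> C \<longrightarrow> X \<noteq> {} \<longrightarrow> (\<exists>x. is_glb_in C le X x))"

definition infimum :: "'a::order set \<Rightarrow> 'a" where
  "infimum X = (THE x. is_glb_in UNIV (\<le>) X x)"

text \<open>States/Effects Chu space (S, E, eps): eps l s is the value of effect l on state s.\<close>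
definition chu_space :: "('e::order \<Rightarrow> 's::order \<Rightarrow> B) \<Rightarrow> bool" where
  "chu_space eps \<longleftrightarrow>
     dc_inf_semilattice (UNIV :: 's set) (\<le>) \<and>
     dc_inf_semilattice (UNIV :: 'e set) (\<le>) \<and>
     (\<exists>b::'s. \<forall>s. b \<le> s) \<and>
     (\<forall>X::'e set. X \<noteq> {} \<longrightarrow> (\<forall>\<sigma>. eps (infimum X) \<sigma> = Bmeet ((\<lambda>l. eps l \<sigma>) ` X))) \<and>
     (\<forall>\<Sigma>::'s set. \<Sigma> \<noteq> {} \<longrightarrow> (\<forall>l. eps l (infimum \<Sigma>) = Bmeet ((\<lambda>\<sigma>. eps l \<sigma>) ` \<Sigma>))) \<and>
     inj eps \<and>
     (\<forall>\<sigma> \<sigma>'. (\<forall>l. eps l \<sigma> = eps l \<sigma>') \<longrightarrow> \<sigma> = \<sigma>') \<and>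
     (\<forall>l. \<exists>l'. \<forall>\<sigma>. eps l' \<sigma> = negB (eps l \<sigma>)) \<and>
     (\<exists>y. \<forall>\<sigma>. eps y \<sigma> = Yb)"

text \<open>Negation of an effect and the yes-effect (unique by separation).\<close>
definition negE :: "('e \<Rightarrow> 's \<Rightarrow> B) \<Rightarrow> 'e \<Rightarrow> 'e" where
  "negE eps l = (THE l'. \<forall>\<sigma>. eps l' \<sigma> = negB (eps l \<sigma>))"

definition YE :: "('e \<Rightarrow> 's \<Rightarrow> B) \<Rightarrow> 'e" where
  "YE eps = (THE y. \<forall>\<sigma>. eps y \<sigma> = Yb)"

definition maxtensor :: "('ea::order \<Rightarrow> 'sa::order \<Rightarrow> B) \<Rightarrow> ('eb::order \<Rightarrow> 'sb::order \<Rightarrow> B)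
    \<Rightarrow> ('ea \<times> 'eb \<Rightarrow> B) set" where
  "maxtensor epsA epsB = {\<Phi>.
     (\<forall>X. X \<noteq> {} \<longrightarrow> (\<forall>lb. \<Phi> (infimum X, lb) = Bmeet ((\<lambda>la. \<Phi> (la, lb)) ` X))) \<and>
     (\<forall>X. X \<noteq> {} \<longrightarrow> (\<forall>la. \<Phi> (la, infimum X) = Bmeet ((\<lambda>lb. \<Phi> (la, lb)) ` X))) \<and>
     (\<forall>la. \<Phi> (negE epsA la, YE epsB) = negB (\<Phi> (la, YE epsB))) \<and>
     (\<forall>lb. \<Phi> (YE epsA, negE epsB lb) = negB (\<Phi> (YE epsA, lb))) \<and>
     \<Phi> (YE epsA, YE epsB) = Yb}"

definition lePW :: "('a \<Rightarrow> B) \<Rightarrow> ('a \<Rightarrow> B) \<Rightarrow> bool" where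
  "lePW \<Phi> \<Psi> \<longleftrightarrow> (\<forall>p. leB (\<Phi> p) (\<Psi> p))"

end

theory Submission
  imports Defs
begin

(* Meets in B
   commute with meets and with negation, so the pointwise meet of a nonempty family of elements of
   the maximal tensor product belongs to it again. Being the greatest lower bound of the family
   among all maps, it is a fortiori the greatest lower bound inside the maximal tensor product. *)

lemma B_eqI: "(a = Yb \<longleftrightarrow> b = Yb) \<Longrightarrow> (a = Nb \<longleftrightarrow> b = Nb) \<Longrightarrow> a = b"
  by (cases a; cases b) auto

lemma negB_eq_Yb_iff [simp]: "negB x = Yb \<longleftrightarrow> x = Nb"
  by (cases x) (auto simp: negB_def)

lemma negB_eq_Nb_iff [simp]: "negB x = Nb \<longleftrightarrow> x = Yb"
  by (cases x) (auto simp: negB_def)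

lemma Bmeet_image_eq_Yb_iff: "I \<noteq> {} \<Longrightarrow> Bmeet (f ` I) = Yb \<longleftrightarrow> (\<forall>i\<in>I. f i = Yb)"
  unfolding Bmeet_def by (auto simp: subset_singleton_iff) blast

lemma Bmeet_image_eq_Nb_iff: "I \<noteq> {} \<Longrightarrow> Bmeet (f ` I) = Nb \<longleftrightarrow> (\<forall>i\<in>I. f i = Nb)"
  unfolding Bmeet_def by (auto simp: subset_singleton_iff) blast

lemma Bmeet_image_const: "I \<noteq> {} \<Longrightarrow> Bmeet ((\<lambda>_. c) ` I) = c"
  unfolding Bmeet_def by auto

lemma Bmeet_image_swap:
  assumes "I \<noteq> {}" "X \<noteq> {}"
  shows "Bmeet ((\<lambda>i. Bmeet (f i ` X)) ` I) = Bmeet ((\<lambda>x. Bmeet ((\<lambda>i. f i x) ` I)) ` X)"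
  using assms by (intro B_eqI) (simp_all add: Bmeet_image_eq_Yb_iff Bmeet_image_eq_Nb_iff; blast)+

lemma Bmeet_image_negB: "I \<noteq> {} \<Longrightarrow> Bmeet ((\<lambda>i. negB (f i)) ` I) = negB (Bmeet (f ` I))"
  by (intro B_eqI) (simp_all add: Bmeet_image_eq_Yb_iff Bmeet_image_eq_Nb_iff)

lemma is_glb_in_Bmeet: "X \<noteq> {} \<Longrightarrow> is_glb_in UNIV leB X (Bmeet X)"
  unfolding is_glb_in_def Bmeet_def leB_def by (auto simp: the_elem_def)

lemma lePW_refl: "lePW \<Phi> \<Phi>"
  by (simp add: lePW_def leB_def)

lemma lePW_antisym: "lePW \<Phi> \<Psi> \<Longrightarrow> lePW \<Psi> \<Phi> \<Longrightarrow> \<Phi> = \<Psi>"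
  unfolding lePW_def leB_def by (metis B.distinct(3,5) ext)

lemma lePW_trans: "lePW \<Phi> \<Psi> \<Longrightarrow> lePW \<Psi> \<Theta> \<Longrightarrow> lePW \<Phi> \<Theta>"
  unfolding lePW_def leB_def by fastforce

lemma is_glb_in_pointwise_Bmeet:
  assumes "I \<noteq> {}"
  shows "is_glb_in UNIV lePW (\<Phi> ` I) (\<lambda>p. Bmeet ((\<lambda>i. \<Phi> i p) ` I))"
  using is_glb_in_Bmeet[of "(\<lambda>i. \<Phi> i _) ` I"] assms
  unfolding is_glb_in_def lePW_def by auto

lemma is_glb_in_subset:
  "is_glb_in C le X x \<Longrightarrow> x \<in> D \<Longrightarrow> D \<subseteq> C \<Longrightarrow> is_glb_in D le X x"
  unfolding is_glb_in_def by blast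

lemma maxtensor_pointwise_Bmeet_closed:
  fixes \<Phi> :: "'i \<Rightarrow> 'ea::order \<times> 'eb::order \<Rightarrow> B"
  assumes I: "I \<noteq> {}" and sub: "\<Phi> ` I \<subseteq> maxtensor epsA epsB"
  shows "(\<lambda>p. Bmeet ((\<lambda>i. \<Phi> i p) ` I)) \<in> maxtensor epsA epsB"
proof -
  let ?M = "\<lambda>p. Bmeet ((\<lambda>i. \<Phi> i p) ` I)"
  have \<Phi>: "\<Phi> i \<in> maxtensor epsA epsB" if "i \<in> I" for i
    using sub that by auto
  have "?M (infimum X, lb) = Bmeet ((\<lambda>la. ?M (la, lb)) ` X)" if X: "X \<noteq> {}" for X lb
  proof -
    have "?M (infimum X, lb) = Bmeet ((\<lambda>i. Bmeet ((\<lambda>la. \<Phi> i (la, lb)) ` X)) ` I)"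
      using \<Phi> X by (simp add: maxtensor_def cong: image_cong)
    also have "\<dots> = Bmeet ((\<lambda>la. ?M (la, lb)) ` X)"
      by (rule Bmeet_image_swap[OF I X])
    finally show ?thesis .
  qed
  moreover have "?M (la, infimum X) = Bmeet ((\<lambda>lb. ?M (la, lb)) ` X)" if X: "X \<noteq> {}" for X la
  proof -
    have "?M (la, infimum X) = Bmeet ((\<lambda>i. Bmeet ((\<lambda>lb. \<Phi> i (la, lb)) ` X)) ` I)"
      using \<Phi> X by (simp add: maxtensor_def cong: image_cong)
    also have "\<dots> = Bmeet ((\<lambda>lb. ?M (la, lb)) ` X)"
      by (rule Bmeet_image_swap[OF I X])
    finally show ?thesis .
  qed
  moreover have "?M (negE epsA la, YE epsB) = negB (?M (la, YE epsB))" for la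
  proof -
    have "?M (negE epsA la, YE epsB) = Bmeet ((\<lambda>i. negB (\<Phi> i (la, YE epsB))) ` I)"
      using \<Phi> by (simp add: maxtensor_def cong: image_cong)
    then show ?thesis
      using Bmeet_image_negB[OF I] by simp
  qed
  moreover have "?M (YE epsA, negE epsB lb) = negB (?M (YE epsA, lb))" for lb
  proof -
    have "?M (YE epsA, negE epsB lb) = Bmeet ((\<lambda>i. negB (\<Phi> i (YE epsA, lb))) ` I)"
      using \<Phi> by (simp add: maxtensor_def cong: image_cong)
    then show ?thesis
      using Bmeet_image_negB[OF I] by simp
  qed
  moreover have "?M (YE epsA, YE epsB) = Yb"
    using \<Phi> I by (simp add: maxtensor_def Bmeet_image_const cong: image_cong)
  ultimately show ?thesis
    unfolding maxtensor_def by blast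
qed

lemma maxtensor_is_glb_in_pointwise_Bmeet:
  assumes "I \<noteq> {}" and "\<Phi> ` I \<subseteq> maxtensor epsA epsB"
  shows "is_glb_in (maxtensor epsA epsB) lePW (\<Phi> ` I) (\<lambda>p. Bmeet ((\<lambda>i. \<Phi> i p) ` I))"
  using is_glb_in_pointwise_Bmeet[OF assms(1)] maxtensor_pointwise_Bmeet_closed[OF assms]
  by (rule is_glb_in_subset) simp

lemma dc_inf_semilattice_maxtensor: "dc_inf_semilattice (maxtensor epsA epsB) lePW"
  unfolding dc_inf_semilattice_def
proof (intro conjI ballI allI impI lePW_refl lePW_antisym)
  show "lePW x z" if "lePW x y" "lePW y z" for x y z
    using that by (rule lePW_trans)
  show "\<exists>x. is_glb_in (maxtensor epsA epsB) lePW X x"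
    if "X \<subseteq> maxtensor epsA epsB" "X \<noteq> {}" for X
    using maxtensor_is_glb_in_pointwise_Bmeet[of X id] that by auto
qed

theorem mainTheorem1:
  fixes epsA :: "'ea::order \<Rightarrow> 'sa::order \<Rightarrow> B"
    and epsB :: "'eb::order \<Rightarrow> 'sb::order \<Rightarrow> B"
  assumes "chu_space epsA" and "chu_space epsB"
  shows "dc_inf_semilattice (maxtensor epsA epsB) lePW \<and>
    (\<forall>(I :: 'i set) (\<Phi> :: 'i \<Rightarrow> 'ea \<times> 'eb \<Rightarrow> B).
       I \<noteq> {} \<longrightarrow> \<Phi> ` I \<subseteq> maxtensor epsA epsB \<longrightarrow>
       is_glb_in (maxtensor epsA epsB) lePW (\<Phi> ` I)
         (\<lambda>(la, lb). Bmeet ((\<lambda>i. \<Phi> i (la, lb)) ` I)))"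
  unfolding case_prod_beta' prod.collapse
  by (intro conjI allI impI dc_inf_semilattice_maxtensor maxtensor_is_glb_in_pointwise_Bmeet)

end
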